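(* Let $B\ge 2$ and $\eta\in\mathbb{N}$. Then $\alpha_{\eta+1}\le 2B$, i.e. $\gamma_B(\eta+1)$ has at most $2B$ base-$B$ digits different from $B-1$.
   Context: Fix an integer base $B \geq 2$. Every integer $x>0$ is written uniquely as $x=\sum_{i=0}^{L(x)-1} x_i B^i$ with digits $0 \le x_i \le B-1$ and $x_{L(x)-1}\neq 0$. Define $\mathcal{H}_B(x)=\sum_{i=0}^{L(x)-1} x_i^2$, $\mathcal{H}_B(0)=0$, $\mathcal{H}_B^0(x)=x$, $\mathcal{H}_B^{n}=\mathcal{H}_B\circ\mathcal{H}_B^{n-1}$. A positive integer $x$ is happy if $\mathcal{H}_B^n(x)=1$ for some $n\in\mathbb{N}$; its height is $\eta_B(x)=\min\{\alpha\in\mathbb{N}:\mathcal{H}_B^\alpha(x)=1\}$. For $n\in\mathbb{N}$, $\gamma_B(n)$ denotes the smallest happy number $x\ge 1$ with $\eta_B(x)=n$. For each $n$, $L_n=L(\gamma_B(n))$ is the number of base-$B$ digits of $\gamma_B(n)$, $t_n$ is the number of those digits equal to $B-1$, and $\alpha_n=L_n-t_n$ is the number of digits smaller than $B-1$. *)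

theory Defs
  imports Main
begin

function digits :: "nat \<Rightarrow> nat \<Rightarrow> nat list" where
  "digits B x = (if B < 2 \<or> x = 0 then [] else x mod B # digits B (x div B))"
  by auto
termination by (relation "measure (\<lambda>(B, x). x)") auto

declare digits.simps[simp del]

definition H :: "nat \<Rightarrow> nat \<Rightarrow> nat" where
  "H B x = (\<Sum>d\<leftarrow>digits B x. d ^ 2)"

definition happy :: "nat \<Rightarrow> nat \<Rightarrow> bool" where
  "happy B x \<longleftrightarrow> x > 0 \<and> (\<exists>n. (H B ^^ n) x = 1)"

definition height :: "nat \<Rightarrow> nat \<Rightarrow> nat" where
  "height B x = (LEAST a. (H B ^^ a) x = 1)"

definition gamma :: "nat \<Rightarrow> nat \<Rightarrow> nat" where
  "gamma B n = (LEAST x. x \<ge> 1 \<and> happy B x \<and> height B x = n)"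

definition alpha :: "nat \<Rightarrow> nat \<Rightarrow> nat" where
  "alpha B n = length (filter (\<lambda>d. d < B - 1) (digits B (gamma B n)))"

end

theory Submission
  imports Defs "HOL-Computational_Algebra.Primes"
begin

text \<open>Let \<open>x = \<gamma>\<^sub>B(\<eta> + 1)\<close> have \<open>L\<close> digits, \<open>k\<close> of them below \<open>B - 1\<close>, and suppose
\<open>k > 2B\<close>. A digit below \<open>B - 1\<close> contributes at most \<open>(B - 1)\<^sup>2 - (2B - 3)\<close> to \<open>H\<^sub>B(x)\<close>, so
\<open>H\<^sub>B(x) < (L - 4)(B - 1)\<^sup>2\<close>. Write \<open>H\<^sub>B(x) = Q(B - 1)\<^sup>2 + r\<close> with \<open>r < (B - 1)\<^sup>2\<close> and, by
Lagrange's theorem, \<open>r = a\<^sup>2 + b\<^sup>2 + c\<^sup>2 + d\<^sup>2\<close>; then \<open>a, b, c, d < B - 1\<close>, and the number with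
digits \<open>a, b, c, d\<close> and \<open>Q\<close> digits \<open>B - 1\<close> has at most \<open>L - 1\<close> digits, so it is smaller
than \<open>x\<close> but has the same image under \<open>H\<^sub>B\<close>. Hence it is happy of the same height,
contradicting the minimality of \<open>x\<close>. Lagrange's theorem is proved by Euler's descent.\<close>

section \<open>Lagrange's four-square theorem\<close>

definition sum_four_squares :: "int \<Rightarrow> bool" where
  "sum_four_squares n \<longleftrightarrow> (\<exists>a b c d. n = a\<^sup>2 + b\<^sup>2 + c\<^sup>2 + d\<^sup>2)"

lemma euler_four_square_identity:
  fixes x1 x2 x3 x4 y1 y2 y3 y4 :: int
  shows "(x1\<^sup>2 + x2\<^sup>2 + x3\<^sup>2 + x4\<^sup>2) * (y1\<^sup>2 + y2\<^sup>2 + y3\<^sup>2 + y4\<^sup>2) =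
    (x1*y1 + x2*y2 + x3*y3 + x4*y4)\<^sup>2 + (x1*y2 - x2*y1 + x3*y4 - x4*y3)\<^sup>2
    + (x1*y3 - x3*y1 - x2*y4 + x4*y2)\<^sup>2 + (x1*y4 - x4*y1 + x2*y3 - x3*y2)\<^sup>2"
  by (simp add: power2_eq_square algebra_simps)

lemma sum_four_squares_mult:
  "sum_four_squares a \<Longrightarrow> sum_four_squares b \<Longrightarrow> sum_four_squares (a * b)"
  unfolding sum_four_squares_def by (metis euler_four_square_identity)

lemma inj_on_square_mod_prime:
  fixes p :: int
  assumes "prime p"
  shows "inj_on (\<lambda>x. x\<^sup>2 mod p) {x. 0 \<le> x \<and> 2 * x < p}"
proof (rule inj_onI)
  fix x y assume x: "x \<in> {x. 0 \<le> x \<and> 2 * x < p}" and y: "y \<in> {x. 0 \<le> x \<and> 2 * x < p}"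
    and "x\<^sup>2 mod p = y\<^sup>2 mod p"
  then have "p dvd (x - y) * (x + y)"
    by (simp add: mod_eq_dvd_iff power2_eq_square algebra_simps)
  then have "p dvd x - y \<or> p dvd x + y"
    using assms by (simp add: prime_dvd_mult_iff)
  moreover have "\<bar>x - y\<bar> < p" "0 \<le> x + y" "x + y < p"
    using x y by auto
  moreover have "0 < p"
    using assms prime_gt_0_int by blast
  ultimately show "x = y"
  proof (elim disjE)
    assume "p dvd x - y"
    then show "x = y"
      using dvd_imp_le_int[of "x - y" p] \<open>\<bar>x - y\<bar> < p\<close> \<open>0 < p\<close> by (cases "x = y") auto
  next
    assume "p dvd x + y"
    then have "x + y = 0"
      using dvd_imp_le_int[of "x + y" p] \<open>x + y < p\<close> \<open>0 \<le> x + y\<close> \<open>0 < p\<close> by fastforce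
    then show "x = y"
      using x y by simp
  qed
qed

lemma prime_dvd_two_squares_plus_one:
  fixes p :: int
  assumes "prime p" "odd p"
  shows "\<exists>x y. 0 \<le> x \<and> 2 * x < p \<and> 0 \<le> y \<and> 2 * y < p \<and> p dvd x\<^sup>2 + y\<^sup>2 + 1"
proof -
  define S where "S = {x. 0 \<le> x \<and> 2 * x < p}"
  define f where "f = (\<lambda>x. x\<^sup>2 mod p)"
  define g where "g = (\<lambda>y. (- 1 - y\<^sup>2) mod p)"
  have p: "0 < p"
    using assms(1) prime_gt_0_int by blast
  have inj_f: "inj_on f S"
    unfolding f_def S_def by (rule inj_on_square_mod_prime[OF assms(1)])
  have "inj_on g S"
  proof (rule inj_onI)
    fix x y assume "x \<in> S" "y \<in> S" "g x = g y"
    then have "f x = f y"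
      unfolding f_def g_def by (simp add: mod_eq_dvd_iff dvd_diff_commute)
    then show "x = y"
      using inj_f \<open>x \<in> S\<close> \<open>y \<in> S\<close> by (simp add: inj_on_eq_iff)
  qed
  obtain k where k: "p = 2 * k + 1"
    using assms(2) by (rule oddE)
  then have S: "S = {0..k}"
    unfolding S_def by auto
  then have card_S: "2 * card S = nat p + 1"
    using k p by simp
  have "f ` S \<union> g ` S \<subseteq> {0..<p}"
    unfolding f_def g_def using p by auto
  then have "card (f ` S \<union> g ` S) \<le> nat p"
    by (metis card_atLeastLessThan_int card_mono diff_zero finite_atLeastLessThan_int)
  moreover have "finite S"
    unfolding S by simp
  ultimately have "f ` S \<inter> g ` S \<noteq> {}"
    using card_S card_Un_disjoint[of "f ` S" "g ` S"] card_image[OF inj_f]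
      card_image[OF \<open>inj_on g S\<close>] by auto
  then obtain x y where "x \<in> S" "y \<in> S" "f x = g y"
    by auto
  then show ?thesis
    unfolding S_def f_def g_def by (auto simp: mod_eq_dvd_iff algebra_simps)
qed

lemma exists_small_representative:
  fixes M z :: int
  assumes "0 < M"
  shows "\<exists>t. 4 * (z - M * t)\<^sup>2 \<le> M\<^sup>2"
proof -
  define r where "r = z mod M"
  have z: "z = M * (z div M) + r" and r: "0 \<le> r" "r < M"
    using assms unfolding r_def by simp_all
  have "\<exists>t. \<bar>2 * (z - M * t)\<bar> \<le> \<bar>M\<bar>"
  proof (cases "2 * r \<le> M")
    case True
    then show ?thesis
      using z r by (intro exI[of _ "z div M"]) simp
  next
    case False
    then show ?thesis
      using z r by (intro exI[of _ "z div M + 1"]) (simp add: algebra_simps)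
  qed
  then obtain t where "(2 * (z - M * t))\<^sup>2 \<le> M\<^sup>2"
    by (auto simp only: abs_le_square_iff)
  moreover have "(2 * (z - M * t))\<^sup>2 = 4 * (z - M * t)\<^sup>2"
    by (simp add: power2_eq_square algebra_simps)
  ultimately show ?thesis
    by auto
qed

lemma dvd_double_if_square_eq:
  fixes M y :: int
  assumes "4 * y\<^sup>2 = M\<^sup>2"
  shows "M dvd 2 * y"
proof -
  have "(2 * y)\<^sup>2 = M\<^sup>2"
    using assms by (simp add: power_mult_distrib)
  then have "2 * y = M \<or> 2 * y = - M"
    by (metis power2_eq_iff)
  then show ?thesis
    by auto
qed

lemma sum_four_squares_of_reduced:
  fixes M P R x1 x2 x3 x4 t1 t2 t3 t4 :: int
  assumes "M \<noteq> 0" and x: "M * P = x1\<^sup>2 + x2\<^sup>2 + x3\<^sup>2 + x4\<^sup>2"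
    and y: "(x1 - M*t1)\<^sup>2 + (x2 - M*t2)\<^sup>2 + (x3 - M*t3)\<^sup>2 + (x4 - M*t4)\<^sup>2 = M * R"
  shows "sum_four_squares (R * P)"
proof -
  define w1 where "w1 = P - (x1*t1 + x2*t2 + x3*t3 + x4*t4)"
  define w2 where "w2 = - x1*t2 + x2*t1 - x3*t4 + x4*t3"
  define w3 where "w3 = - x1*t3 + x3*t1 + x2*t4 - x4*t2"
  define w4 where "w4 = - x1*t4 + x4*t1 - x2*t3 + x3*t2"
  \<comment> \<open>Each component of Euler's product of \<open>x\<close> and \<open>x - M t\<close> is divisible by \<open>M\<close>.\<close>
  have "(M * P) * (M * R) = (M*w1)\<^sup>2 + (M*w2)\<^sup>2 + (M*w3)\<^sup>2 + (M*w4)\<^sup>2"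
  proof -
    have "x1*(x1 - M*t1) + x2*(x2 - M*t2) + x3*(x3 - M*t3) + x4*(x4 - M*t4) = M * w1"
      unfolding w1_def using x by (simp add: power2_eq_square algebra_simps)
    moreover have "x1*(x2 - M*t2) - x2*(x1 - M*t1) + x3*(x4 - M*t4) - x4*(x3 - M*t3) = M * w2"
      "x1*(x3 - M*t3) - x3*(x1 - M*t1) - x2*(x4 - M*t4) + x4*(x2 - M*t2) = M * w3"
      "x1*(x4 - M*t4) - x4*(x1 - M*t1) + x2*(x3 - M*t3) - x3*(x2 - M*t2) = M * w4"
      unfolding w2_def w3_def w4_def by (simp_all add: algebra_simps)
    ultimately show ?thesis
      using euler_four_square_identity[of x1 x2 x3 x4 "x1 - M*t1" "x2 - M*t2" "x3 - M*t3" "x4 - M*t4"]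
      unfolding x y by simp
  qed
  then have "(M * M) * (R * P) = (M * M) * (w1\<^sup>2 + w2\<^sup>2 + w3\<^sup>2 + w4\<^sup>2)"
    by (simp add: power2_eq_square algebra_simps)
  then show ?thesis
    using \<open>M \<noteq> 0\<close> unfolding sum_four_squares_def by auto
qed

lemma square_dvd_if_extreme_reduction:
  fixes M R y1 y2 y3 y4 t1 t2 t3 t4 :: int
  assumes small: "4 * y1\<^sup>2 \<le> M\<^sup>2" "4 * y2\<^sup>2 \<le> M\<^sup>2" "4 * y3\<^sup>2 \<le> M\<^sup>2" "4 * y4\<^sup>2 \<le> M\<^sup>2"
    and y: "y1\<^sup>2 + y2\<^sup>2 + y3\<^sup>2 + y4\<^sup>2 = M * R" and R: "R = 0 \<or> R = M"
  shows "M\<^sup>2 dvd (y1 + M*t1)\<^sup>2 + (y2 + M*t2)\<^sup>2 + (y3 + M*t3)\<^sup>2 + (y4 + M*t4)\<^sup>2"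
proof -
  have "M dvd 2 * y1 \<and> M dvd 2 * y2 \<and> M dvd 2 * y3 \<and> M dvd 2 * y4"
    using R
  proof
    assume "R = 0"
    then show ?thesis
      using y by (simp add: sum_power2_eq_zero_iff add_nonneg_eq_0_iff)
  next
    assume "R = M"
    then have "4 * y1\<^sup>2 = M\<^sup>2 \<and> 4 * y2\<^sup>2 = M\<^sup>2 \<and> 4 * y3\<^sup>2 = M\<^sup>2 \<and> 4 * y4\<^sup>2 = M\<^sup>2"
      using y small by (simp add: power2_eq_square)
    then show ?thesis
      by (simp add: dvd_double_if_square_eq)
  qed
  then obtain s1 s2 s3 s4 where "2 * y1 = M * s1" "2 * y2 = M * s2" "2 * y3 = M * s3" "2 * y4 = M * s4"
    by (auto elim!: dvdE)
  then have "(y1 + M*t1)\<^sup>2 + (y2 + M*t2)\<^sup>2 + (y3 + M*t3)\<^sup>2 + (y4 + M*t4)\<^sup>2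
      = M * R + M\<^sup>2 * (s1*t1 + s2*t2 + s3*t3 + s4*t4 + t1\<^sup>2 + t2\<^sup>2 + t3\<^sup>2 + t4\<^sup>2)"
    unfolding y[symmetric] by (simp add: power2_eq_square algebra_simps)
  moreover have "M\<^sup>2 dvd M * R"
    using R by (auto simp: power2_eq_square)
  ultimately show ?thesis
    by simp
qed

lemma sum_four_squares_descent:
  fixes m p :: nat
  assumes p: "prime p" and m: "1 < m" "m < p" and sq: "sum_four_squares (int m * int p)"
  shows "\<exists>r. 0 < r \<and> r < m \<and> sum_four_squares (int r * int p)"
proof -
  define M where "M = int m"
  have "0 < M"
    using m unfolding M_def by simp
  obtain x1 x2 x3 x4 where x: "M * int p = x1\<^sup>2 + x2\<^sup>2 + x3\<^sup>2 + x4\<^sup>2"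
    using sq unfolding sum_four_squares_def M_def by blast
  obtain t1 t2 t3 t4 where small:
      "4 * (x1 - M*t1)\<^sup>2 \<le> M\<^sup>2" "4 * (x2 - M*t2)\<^sup>2 \<le> M\<^sup>2"
      "4 * (x3 - M*t3)\<^sup>2 \<le> M\<^sup>2" "4 * (x4 - M*t4)\<^sup>2 \<le> M\<^sup>2"
    using exists_small_representative[OF \<open>0 < M\<close>] by metis
  have "(x1 - M*t1)\<^sup>2 + (x2 - M*t2)\<^sup>2 + (x3 - M*t3)\<^sup>2 + (x4 - M*t4)\<^sup>2
      = M * (int p - (2*x1*t1 + 2*x2*t2 + 2*x3*t3 + 2*x4*t4) + M * (t1\<^sup>2 + t2\<^sup>2 + t3\<^sup>2 + t4\<^sup>2))"
    using x by (simp add: power2_eq_square algebra_simps)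
  then obtain R where R: "(x1 - M*t1)\<^sup>2 + (x2 - M*t2)\<^sup>2 + (x3 - M*t3)\<^sup>2 + (x4 - M*t4)\<^sup>2 = M * R"
    by blast
  have "0 \<le> M * R"
    unfolding R[symmetric] by simp
  then have "0 \<le> R"
    using \<open>0 < M\<close> by (simp add: zero_le_mult_iff)
  have "M * R \<le> M * M"
    using small R by (simp add: power2_eq_square)
  then have "R \<le> M"
    using \<open>0 < M\<close> by simp
  have "R \<noteq> 0 \<and> R \<noteq> M"
  proof (rule ccontr)
    assume "\<not> (R \<noteq> 0 \<and> R \<noteq> M)"
    then have "M\<^sup>2 dvd M * int p"
      using square_dvd_if_extreme_reduction[OF small R, of t1 t2 t3 t4] x by simp
    then have "m dvd p"
      using \<open>0 < M\<close> unfolding M_def by (simp add: power2_eq_square)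
    then show False
      using p m by (auto simp: prime_nat_iff)
  qed
  then show ?thesis
    using sum_four_squares_of_reduced[OF _ x R] \<open>0 \<le> R\<close> \<open>R \<le> M\<close> \<open>0 < M\<close>
    by (intro exI[of _ "nat R"]) (auto simp: M_def)
qed

lemma odd_prime_small_multiple_sum_four_squares:
  fixes p :: nat
  assumes "prime p" "odd p"
  shows "\<exists>k. 0 < k \<and> k < p \<and> sum_four_squares (int k * int p)"
proof -
  have "2 \<le> p"
    using assms prime_ge_2_nat by blast
  obtain x y :: int where xy: "0 \<le> x" "2 * x < int p" "0 \<le> y" "2 * y < int p" "int p dvd x\<^sup>2 + y\<^sup>2 + 1"
    using prime_dvd_two_squares_plus_one[of "int p"] assms by auto
  then obtain k where k: "x\<^sup>2 + y\<^sup>2 + 1 = int p * k"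
    by (elim dvdE)
  have "4 * x\<^sup>2 < int p * int p" "4 * y\<^sup>2 < int p * int p"
    using xy mult_strict_mono[of "2 * x" "int p" "2 * x" "int p"]
      mult_strict_mono[of "2 * y" "int p" "2 * y" "int p"]
    by (simp_all add: power2_eq_square)
  moreover have "4 \<le> int p * int p"
    using \<open>2 \<le> p\<close> mult_mono[of 2 "int p" 2 "int p"] by simp
  ultimately have "int p * k < int p * int p"
    using k unfolding power2_eq_square by linarith
  then have "k < int p"
    by (simp add: mult_less_cancel_left)
  have "0 < int p * k"
    using k[symmetric] by (smt (verit) zero_le_power2)
  then have "0 < k"
    by (simp add: zero_less_mult_iff)
  have "int (nat k) * int p = x\<^sup>2 + y\<^sup>2 + 1\<^sup>2 + 0\<^sup>2"
    using k \<open>0 < k\<close> by (simp add: mult.commute)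
  then have "sum_four_squares (int (nat k) * int p)"
    unfolding sum_four_squares_def by blast
  then show ?thesis
    using \<open>0 < k\<close> \<open>k < int p\<close> by (intro exI[of _ "nat k"]) simp
qed

lemma prime_sum_four_squares:
  fixes p :: nat
  assumes "prime p"
  shows "sum_four_squares (int p)"
proof (cases "p = 2")
  case True
  then show ?thesis
    unfolding sum_four_squares_def by (intro exI[of _ 1] exI[of _ 0]) simp
next
  case False
  have "2 \<le> p"
    using assms prime_ge_2_nat by blast
  then have "odd p"
    using assms False prime_odd_nat by simp
  define S where "S = {r. 0 < r \<and> sum_four_squares (int r * int p)}"
  obtain k where "k \<in> S" "k < p"
    using odd_prime_small_multiple_sum_four_squares[OF assms \<open>odd p\<close>] unfolding S_def by blast
  define r where "r = (LEAST r. r \<in> S)"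
  have "r \<in> S" "r \<le> k"
    unfolding r_def using \<open>k \<in> S\<close> by (auto intro: LeastI Least_le)
  have "r = 1"
  proof (rule ccontr)
    assume "r \<noteq> 1"
    then have "1 < r" "r < p" "sum_four_squares (int r * int p)"
      using \<open>r \<in> S\<close> \<open>r \<le> k\<close> \<open>k < p\<close> unfolding S_def by auto
    then obtain r' where "r' \<in> S" "r' < r"
      using sum_four_squares_descent[OF assms] unfolding S_def by blast
    then show False
      using not_less_Least[of r' "\<lambda>r. r \<in> S"] unfolding r_def by blast
  qed
  then show ?thesis
    using \<open>r \<in> S\<close> unfolding S_def by simp
qed

theorem sum_four_squares_nat: "\<exists>a b c d :: nat. n = a\<^sup>2 + b\<^sup>2 + c\<^sup>2 + d\<^sup>2"
proof -
  have "sum_four_squares (int n)"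
  proof (induction n rule: prime_divisors_induct)
    case zero
    then show ?case
      unfolding sum_four_squares_def by (intro exI[of _ 0]) simp
  next
    case (unit n)
    then show ?case
      unfolding sum_four_squares_def by (intro exI[of _ 1] exI[of _ 0]) simp
  next
    case (factor p n)
    then show ?case
      using prime_sum_four_squares sum_four_squares_mult by (metis of_nat_mult)
  qed
  then obtain a b c d where n: "int n = a\<^sup>2 + b\<^sup>2 + c\<^sup>2 + d\<^sup>2"
    unfolding sum_four_squares_def by blast
  have "int n = int ((nat \<bar>a\<bar>)\<^sup>2 + (nat \<bar>b\<bar>)\<^sup>2 + (nat \<bar>c\<bar>)\<^sup>2 + (nat \<bar>d\<bar>)\<^sup>2)"
    unfolding n by simp
  then have "n = (nat \<bar>a\<bar>)\<^sup>2 + (nat \<bar>b\<bar>)\<^sup>2 + (nat \<bar>c\<bar>)\<^sup>2 + (nat \<bar>d\<bar>)\<^sup>2"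
    by (simp only: of_nat_eq_iff)
  then show ?thesis
    by blast
qed

section \<open>Base-\<open>B\<close> digits and the map \<open>H\<^sub>B\<close>\<close>

fun from_digits :: "nat \<Rightarrow> nat list \<Rightarrow> nat" where
  "from_digits B [] = 0"
| "from_digits B (d # ds) = d + B * from_digits B ds"

lemma digits_0 [simp]: "digits B 0 = []"
  by (simp add: digits.simps)

lemma digits_eq_Cons: "2 \<le> B \<Longrightarrow> 0 < x \<Longrightarrow> digits B x = x mod B # digits B (x div B)"
  by (simp add: digits.simps)

lemma H_0 [simp]: "H B 0 = 0"
  by (simp add: H_def)

lemma H_eq: "2 \<le> B \<Longrightarrow> 0 < x \<Longrightarrow> H B x = (x mod B)\<^sup>2 + H B (x div B)"
  by (simp add: H_def digits_eq_Cons)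

lemma digits_less_base:
  assumes "2 \<le> B"
  shows "d \<in> set (digits B x) \<Longrightarrow> d < B"
proof (induction x rule: less_induct)
  case (less x)
  then have "0 < x"
    by (cases "x = 0") simp_all
  then have "x div B < x"
    using assms by simp
  with less \<open>0 < x\<close> assms show ?case
    by (auto simp: digits_eq_Cons)
qed

lemma base_power_length_digits_le:
  assumes "2 \<le> B"
  shows "0 < x \<Longrightarrow> B ^ (length (digits B x) - 1) \<le> x"
proof (induction x rule: less_induct)
  case (less x)
  show ?case
  proof (cases "x div B = 0")
    case True
    then show ?thesis
      using less.prems assms by (simp add: digits_eq_Cons)
  next
    case False
    then have "B ^ (length (digits B (x div B)) - 1) \<le> x div B"
      using less assms by simp
    have "digits B (x div B) \<noteq> []"
      using False assms by (simp add: digits_eq_Cons)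
    then have "B ^ (length (digits B x) - 1) = B * B ^ (length (digits B (x div B)) - 1)"
      unfolding digits_eq_Cons[OF assms less.prems] by (cases "digits B (x div B)") simp_all
    also have "\<dots> \<le> B * (x div B)"
      using \<open>B ^ (length (digits B (x div B)) - 1) \<le> x div B\<close> by simp
    also have "\<dots> \<le> x"
      by simp
    finally show ?thesis .
  qed
qed

lemma from_digits_less: "\<forall>d\<in>set ds. d < B \<Longrightarrow> from_digits B ds < B ^ length ds"
proof (induction ds)
  case Nil
  then show ?case by simp
next
  case (Cons d ds)
  then have "d + B * from_digits B ds < B * (from_digits B ds + 1)"
    by simp
  also have "\<dots> \<le> B * B ^ length ds"
    using Cons by (intro mult_le_mono2) simp
  finally show ?case
    by simp
qed

lemma H_from_digits:
  assumes "2 \<le> B"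
  shows "\<forall>d\<in>set ds. d < B \<Longrightarrow> H B (from_digits B ds) = (\<Sum>d\<leftarrow>ds. d\<^sup>2)"
proof (induction ds)
  case Nil
  then show ?case by (simp add: H_def)
next
  case (Cons d ds)
  then show ?case
    using assms by (cases "d + B * from_digits B ds = 0") (auto simp: H_eq)
qed

lemma H_pos:
  assumes "2 \<le> B"
  shows "0 < x \<Longrightarrow> 0 < H B x"
proof (induction x rule: less_induct)
  case (less x)
  show ?case
  proof (cases "x mod B = 0")
    case True
    then have "x = B * (x div B)"
      using mult_div_mod_eq[of B x] by simp
    then have "0 < x div B"
      using less.prems by (cases "x div B") simp_all
    then show ?thesis
      using less assms by (simp add: H_eq)
  next
    case False
    then show ?thesis
      using less.prems assms by (simp add: H_eq)
  qed
qed

lemma H_1: "2 \<le> B \<Longrightarrow> H B 1 = 1"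
  by (simp add: H_eq)

lemma H_base: "2 \<le> B \<Longrightarrow> H B B = 1"
  by (simp add: H_eq H_1)

lemma sum_squares_plus_small_digits_le:
  assumes "\<forall>d\<in>set ds. d < B"
  shows "(\<Sum>d\<leftarrow>ds. d\<^sup>2) + (2 * B - 3) * length (filter (\<lambda>d. d < B - 1) ds) \<le> length ds * (B - 1)\<^sup>2"
proof -
  define e where "e = 2 * B - 3"
  \<comment> \<open>\<open>(B - 1)\<^sup>2 - (B - 2)\<^sup>2 = 2 * B - 3\<close>: a digit below \<open>B - 1\<close> leaves that much room.\<close>
  have digit: "d\<^sup>2 + (if d < B - 1 then e else 0) \<le> (B - 1)\<^sup>2" if "d < B" for d
  proof (cases "d < B - 1")
    case True
    then have "d\<^sup>2 \<le> (B - 2)\<^sup>2"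
      by (intro power_mono) simp_all
    moreover obtain n where "B = n + 2"
      using True by (intro that[of "B - 2"]) simp
    then have "(B - 2)\<^sup>2 + e = (B - 1)\<^sup>2"
      unfolding e_def by (simp add: power2_eq_square algebra_simps)
    ultimately have "d\<^sup>2 + e \<le> (B - 1)\<^sup>2"
      by linarith
    then show ?thesis
      using True by simp
  next
    case False
    then have "d \<le> B - 1"
      using that by simp
    then show ?thesis
      using False by (simp add: power_mono)
  qed
  have "(\<Sum>d\<leftarrow>ds. d\<^sup>2) + e * length (filter (\<lambda>d. d < B - 1) ds) \<le> length ds * (B - 1)\<^sup>2"
    using assms
  proof (induction ds)
    case (Cons d ds)
    then show ?case
      using digit[of d] by (simp split: if_splits)
  qed simp
  then show ?thesis
    unfolding e_def .
qed

lemma few_digits_bound: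
  fixes c k L m :: nat
  assumes "1 \<le> c" "2 * c + 3 \<le> k" "m + (2 * c - 1) * k \<le> L * c\<^sup>2"
  shows "m div c\<^sup>2 + 4 < L"
proof -
  have "4 * c\<^sup>2 < (2 * c - 1) * (2 * c + 3)"
    using assms(1) by (cases c) (simp_all add: power2_eq_square algebra_simps)
  also have "\<dots> \<le> (2 * c - 1) * k"
    using assms(2) by simp
  finally have "m div c\<^sup>2 * c\<^sup>2 + 4 * c\<^sup>2 < L * c\<^sup>2"
    using assms(3) div_times_less_eq_dividend[of m "c\<^sup>2"] by linarith
  then have "(m div c\<^sup>2 + 4) * c\<^sup>2 < L * c\<^sup>2"
    by (simp only: add_mult_distrib)
  then show ?thesis
    using mult_less_cancel2 by blast
qed

lemma exists_H_eq_with_few_digits: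
  assumes "2 \<le> B"
  shows "\<exists>y. y < B ^ (m div (B - 1)\<^sup>2 + 4) \<and> H B y = m"
proof -
  define Q where "Q = m div (B - 1)\<^sup>2"
  define r where "r = m mod (B - 1)\<^sup>2"
  have "r < (B - 1)\<^sup>2"
    unfolding r_def using assms by simp
  obtain a b c d where r: "r = a\<^sup>2 + b\<^sup>2 + c\<^sup>2 + d\<^sup>2"
    using sum_four_squares_nat by blast
  have small: "z < B - 1" if "z\<^sup>2 \<le> r" for z
    using that \<open>r < (B - 1)\<^sup>2\<close> by (meson le_less_trans power_less_imp_less_base zero_le)
  define ds where "ds = [a, b, c, d] @ replicate Q (B - 1)"
  have ds: "\<forall>e\<in>set ds. e < B"
    unfolding ds_def using small[of a] small[of b] small[of c] small[of d] r assms by auto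
  have "length ds = Q + 4"
    unfolding ds_def by simp
  then have "from_digits B ds < B ^ (Q + 4)"
    using from_digits_less[OF ds] by simp
  moreover have "H B (from_digits B ds) = m"
    using H_from_digits[OF assms ds] mod_div_mult_eq[of m "(B - 1)\<^sup>2"]
    unfolding ds_def r_def[symmetric] Q_def[symmetric] r by (simp add: sum_list_replicate)
  ultimately show ?thesis
    unfolding Q_def by blast
qed

lemma exists_smaller_with_same_H:
  assumes B: "2 \<le> B" and "0 < x" and many: "2 * B < length (filter (\<lambda>d. d < B - 1) (digits B x))"
  shows "\<exists>x'. 1 < x' \<and> x' < x \<and> H B x' = H B x"
proof -
  define L where "L = length (digits B x)"
  have "H B x + (2 * B - 3) * length (filter (\<lambda>d. d < B - 1) (digits B x)) \<le> L * (B - 1)\<^sup>2"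
    unfolding H_def L_def using digits_less_base[OF B] by (intro sum_squares_plus_small_digits_le) blast
  then have "H B x div (B - 1)\<^sup>2 + 4 < L"
    using B many by (intro few_digits_bound[of "B - 1"]) (simp_all add: diff_mult_distrib2)
  then have "B ^ (H B x div (B - 1)\<^sup>2 + 4) \<le> B ^ (L - 1)"
    using B by (intro power_increasing) simp_all
  then have "B ^ (H B x div (B - 1)\<^sup>2 + 4) \<le> x"
    using base_power_length_digits_le[OF B \<open>0 < x\<close>] unfolding L_def by linarith
  moreover obtain y where y: "y < B ^ (H B x div (B - 1)\<^sup>2 + 4)" "H B y = H B x"
    using exists_H_eq_with_few_digits[OF B] by blast
  moreover have "B ^ 1 < B ^ (H B x div (B - 1)\<^sup>2 + 4)"
    using B by (subst power_strict_increasing_iff) simp_all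
  ultimately have "y < x" "B < x"
    by simp_all
  show ?thesis
  proof (cases "1 < y")
    case True
    then show ?thesis
      using \<open>y < x\<close> y(2) by blast
  next
    case False
    then have "H B x = 1"
      using y(2) H_pos[OF B \<open>0 < x\<close>] H_1[OF B] by (cases y) auto
    then show ?thesis
      using \<open>B < x\<close> B H_base[OF B] by (intro exI[of _ B]) simp
  qed
qed

section \<open>Happy numbers of given height\<close>

lemma funpow_H_eq_1_iff:
  assumes "x \<noteq> 1" "x' \<noteq> 1" "H B x' = H B x"
  shows "(H B ^^ n) x' = 1 \<longleftrightarrow> (H B ^^ n) x = 1"
  using assms by (cases n) (simp_all add: funpow_Suc_right del: funpow.simps)

lemma happy_height_eq_if_H_eq:
  assumes "x \<noteq> 1" "x' \<noteq> 1" "H B x' = H B x" "0 < x'" "happy B x"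
  shows "happy B x' \<and> height B x' = height B x"
  using assms funpow_H_eq_1_iff[OF assms(1-3)] unfolding happy_def height_def by auto

lemma height_1: "height B 1 = 0"
  unfolding height_def by simp

lemma happy_height_if_happy_H:
  assumes "0 < x" "x \<noteq> 1" "happy B (H B x)"
  shows "happy B x \<and> height B x = Suc (height B (H B x))"
proof -
  have iter: "(H B ^^ Suc a) x = (H B ^^ a) (H B x)" for a
    by (simp add: funpow_Suc_right del: funpow.simps)
  obtain a where a: "(H B ^^ a) (H B x) = 1"
    using assms(3) unfolding happy_def by blast
  then have "(H B ^^ Suc a) x = 1"
    by (simp only: iter)
  moreover have "(LEAST a. (H B ^^ a) x = 1) = Suc (LEAST a. (H B ^^ a) (H B x) = 1)"
    using Least_Suc2[of "\<lambda>a. (H B ^^ a) x = 1" "Suc a" "\<lambda>a. (H B ^^ a) (H B x) = 1" a]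
      \<open>(H B ^^ Suc a) x = 1\<close> a assms(2) iter by simp
  ultimately show ?thesis
    unfolding happy_def height_def using assms(1) by blast
qed

lemma exists_happy_of_height:
  assumes B: "2 \<le> B"
  shows "\<exists>x. 1 \<le> x \<and> happy B x \<and> height B x = n"
proof (induction n)
  case 0
  have "happy B 1"
    unfolding happy_def by (auto intro: exI[of _ 0])
  then show ?case
    using height_1 by blast
next
  case (Suc n)
  then obtain y where y: "1 \<le> y" "happy B y" "height B y = n"
    by blast
  \<comment> \<open>Digit lists are least significant first: \<open>x\<close> is written \<open>11\<dots>10\<close> with \<open>y\<close> ones.\<close>
  define x where "x = from_digits B (0 # replicate y 1)"
  have "H B x = y"
    unfolding x_def using H_from_digits[OF B, of "0 # replicate y 1"] B by (simp add: sum_list_replicate)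
  have "replicate y (1::nat) = 1 # replicate (y - 1) 1"
    using y(1) by (cases y) auto
  then have "B \<le> x"
    unfolding x_def by simp
  then have "0 < x" "x \<noteq> 1"
    using B by simp_all
  then show ?case
    using happy_height_if_happy_H[of x B] \<open>H B x = y\<close> y by (intro exI[of _ x]) simp
qed

lemma gamma_happy_height:
  assumes "2 \<le> B"
  shows "happy B (gamma B n) \<and> height B (gamma B n) = n"
  using LeastI_ex[OF exists_happy_of_height[OF assms, of n]] unfolding gamma_def by blast

lemma gamma_le:
  assumes "happy B x" "height B x = n"
  shows "gamma B n \<le> x"
  using assms unfolding gamma_def happy_def by (intro Least_le) simp

theorem corollary2p5:
  fixes B \<eta> :: nat
  assumes "B \<ge> 2"
  shows "alpha B (\<eta> + 1) \<le> 2 * B"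
proof (rule ccontr)
  define x where "x = gamma B (\<eta> + 1)"
  assume "\<not> alpha B (\<eta> + 1) \<le> 2 * B"
  then have many: "2 * B < length (filter (\<lambda>d. d < B - 1) (digits B x))"
    unfolding alpha_def x_def by simp
  have x: "happy B x" "height B x = \<eta> + 1"
    using gamma_happy_height[OF assms] unfolding x_def by simp_all
  then have "0 < x" "x \<noteq> 1"
    using height_1 unfolding happy_def by auto
  obtain x' where x': "1 < x'" "x' < x" "H B x' = H B x"
    using exists_smaller_with_same_H[OF assms \<open>0 < x\<close> many] by blast
  have "x' \<noteq> 1" "0 < x'"
    using x'(1) by simp_all
  then have "happy B x' \<and> height B x' = height B x"
    using happy_height_eq_if_H_eq[OF \<open>x \<noteq> 1\<close> _ x'(3) _ x(1)] by blast
  then have "x \<le> x'"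
    using gamma_le x(2) unfolding x_def by metis
  then show False
    using x'(2) by simp
qed

end
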